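(* Let $B$ be a connected finite dimensional symmetric $\Bbbk$-algebra and let $A$ be the trivial extension of $B$ by the $B$-$B$-bimodule $B$. Then the $A$-$A$-bimodule $A\otimes_BA$ is indecomposable; in fact its endomorphism algebra is local.
   Context: $\Bbbk$ is an algebraically closed field. The trivial extension $A$ of $B$ by a $B$-$B$-bimodule $M$ is the algebra of matrices $\begin{pmatrix}b&m\\0&b\end{pmatrix}$, $b\in B$, $m\in M$, with matrix multiplication; here $M=B$ (which is isomorphic to $B^*=\mathrm{Hom}_\Bbbk(B,\Bbbk)$ since $B$ is symmetric). $B$ is regarded as the subalgebra of diagonal matrices. *)

theory Defs
  imports Main "HOL-Computational_Algebra.Polynomial"
begin

definition alg_closed_field :: "'k::field itself \<Rightarrow> bool" where
  "alg_closed_field _ \<longleftrightarrow> (\<forall>p :: 'k poly. degree p \<ge> 1 \<longrightarrow> (\<exists>x. poly p x = 0))"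

definition k_algebra :: "('k::field \<Rightarrow> 'b::ring_1 \<Rightarrow> 'b) \<Rightarrow> bool" where
  "k_algebra sc \<longleftrightarrow> vector_space sc \<and>
     (\<forall>c x y. sc c (x * y) = sc c x * y \<and> sc c (x * y) = x * sc c y)"

definition fin_dim_algebra :: "('k::field \<Rightarrow> 'b::ring_1 \<Rightarrow> 'b) \<Rightarrow> bool" where
  "fin_dim_algebra sc \<longleftrightarrow> k_algebra sc \<and> (\<exists>S. finite S \<and> module.span sc S = UNIV)"

text \<open>Symmetric algebra: there is a k-linear form t with t(xy) = t(yx) whose associated
  bilinear form (x,y) \<mapsto> t(xy) is nondegenerate (equivalently B \<cong> Hom_k(B,k) as bimodules).\<close>
definition symmetric_algebra :: "('k::field \<Rightarrow> 'b::ring_1 \<Rightarrow> 'b) \<Rightarrow> bool" where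
  "symmetric_algebra sc \<longleftrightarrow>
     (\<exists>t :: 'b \<Rightarrow> 'k. Vector_Spaces.linear sc ((*) :: 'k \<Rightarrow> 'k \<Rightarrow> 'k) t \<and>
        (\<forall>x y. t (x * y) = t (y * x)) \<and>
        (\<forall>x. (\<forall>y. t (x * y) = 0) \<longrightarrow> x = 0))"

definition connected_algebra :: "'b::ring_1 itself \<Rightarrow> bool" where
  "connected_algebra _ \<longleftrightarrow> (0::'b) \<noteq> 1 \<and>
     (\<forall>e::'b. e * e = e \<and> (\<forall>x. e * x = x * e) \<longrightarrow> e = 0 \<or> e = 1)"

text \<open>An element (b, m) stands for the matrix [[b, m], [0, b]].\<close>
definition te_add :: "'b::ring_1 \<times> 'b \<Rightarrow> 'b \<times> 'b \<Rightarrow> 'b \<times> 'b" where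
  "te_add x y = (fst x + fst y, snd x + snd y)"

definition te_mul :: "'b::ring_1 \<times> 'b \<Rightarrow> 'b \<times> 'b \<Rightarrow> 'b \<times> 'b" where
  "te_mul x y = (fst x * fst y, fst x * snd y + snd x * fst y)"

definition te_emb :: "'b::ring_1 \<Rightarrow> 'b \<times> 'b" where
  "te_emb b = (b, 0)"

text \<open>Free abelian group on A \<times> A: finitely supported integer-valued functions.\<close>
definition free_grp :: "((('b::ring_1 \<times> 'b) \<times> ('b \<times> 'b)) \<Rightarrow> int) set" where
  "free_grp = {f. finite {p. f p \<noteq> 0}}"

definition gen :: "('b::ring_1 \<times> 'b) \<times> ('b \<times> 'b) \<Rightarrow> (('b \<times> 'b) \<times> ('b \<times> 'b) \<Rightarrow> int)" where
  "gen p = (\<lambda>q. if q = p then 1 else 0)"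

definition fadd :: "('p \<Rightarrow> int) \<Rightarrow> ('p \<Rightarrow> int) \<Rightarrow> ('p \<Rightarrow> int)" where
  "fadd f g = (\<lambda>q. f q + g q)"

definition fsub :: "('p \<Rightarrow> int) \<Rightarrow> ('p \<Rightarrow> int) \<Rightarrow> ('p \<Rightarrow> int)" where
  "fsub f g = (\<lambda>q. f q - g q)"

text \<open>Subgroup of relations: additivity in each argument and B-balancedness.
  A \<otimes>_B A is free_grp modulo tensor_rel.\<close>
inductive_set tensor_rel :: "((('b::ring_1 \<times> 'b) \<times> ('b \<times> 'b)) \<Rightarrow> int) set" where
  zero: "(\<lambda>_. 0) \<in> tensor_rel"
| addl: "fsub (fsub (gen (te_add x x', y)) (gen (x, y))) (gen (x', y)) \<in> tensor_rel"
| addr: "fsub (fsub (gen (x, te_add y y')) (gen (x, y))) (gen (x, y')) \<in> tensor_rel"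
| bal: "fsub (gen (te_mul x (te_emb b), y)) (gen (x, te_mul (te_emb b) y)) \<in> tensor_rel"
| plus: "f \<in> tensor_rel \<Longrightarrow> g \<in> tensor_rel \<Longrightarrow> fadd f g \<in> tensor_rel"
| neg: "f \<in> tensor_rel \<Longrightarrow> (\<lambda>q. - f q) \<in> tensor_rel"

text \<open>Left and right A-actions on generators: a \<cdot> (x \<otimes> y) = (a x) \<otimes> y, (x \<otimes> y) \<cdot> a = x \<otimes> (y a).\<close>
definition lact :: "'b::ring_1 \<times> 'b \<Rightarrow> (('b \<times> 'b) \<times> ('b \<times> 'b) \<Rightarrow> int) \<Rightarrow> (('b \<times> 'b) \<times> ('b \<times> 'b) \<Rightarrow> int)" where
  "lact a f = (\<lambda>p. \<Sum>q\<in>{q. f q \<noteq> 0 \<and> (te_mul a (fst q), snd q) = p}. f q)"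

definition ract :: "(('b::ring_1 \<times> 'b) \<times> ('b \<times> 'b) \<Rightarrow> int) \<Rightarrow> 'b \<times> 'b \<Rightarrow> (('b \<times> 'b) \<times> ('b \<times> 'b) \<Rightarrow> int)" where
  "ract f a = (\<lambda>p. \<Sum>q\<in>{q. f q \<noteq> 0 \<and> (fst q, te_mul (snd q) a) = p}. f q)"

text \<open>A-A-sub-bimodules of A \<otimes>_B A, represented by their preimages in free_grp.\<close>
definition tensor_submod :: "((('b::ring_1 \<times> 'b) \<times> ('b \<times> 'b)) \<Rightarrow> int) set \<Rightarrow> bool" where
  "tensor_submod U \<longleftrightarrow> tensor_rel \<subseteq> U \<and> U \<subseteq> free_grp \<and>
     (\<forall>f\<in>U. \<forall>g\<in>U. fadd f g \<in> U) \<and> (\<forall>f\<in>U. (\<lambda>q. - f q) \<in> U) \<and>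
     (\<forall>a. \<forall>f\<in>U. lact a f \<in> U \<and> ract f a \<in> U)"

definition tensor_indecomposable :: "'b::ring_1 itself \<Rightarrow> bool" where
  "tensor_indecomposable _ \<longleftrightarrow>
     (\<exists>f\<in>(free_grp :: ((('b \<times> 'b) \<times> ('b \<times> 'b)) \<Rightarrow> int) set). f \<notin> tensor_rel) \<and>
     (\<forall>U V :: ((('b \<times> 'b) \<times> ('b \<times> 'b)) \<Rightarrow> int) set.
        tensor_submod U \<and> tensor_submod V \<and> U \<inter> V = tensor_rel \<and>
        (\<forall>f\<in>free_grp. \<exists>u\<in>U. \<exists>v\<in>V. fsub (fsub f u) v \<in> tensor_rel)
        \<longrightarrow> U = tensor_rel \<or> V = tensor_rel)"

text \<open>Endomorphisms of the A-A-bimodule A \<otimes>_B A, given by maps on representatives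
  that preserve the relation subgroup and are additive and A-A-linear modulo it.\<close>
definition tensor_endo :: "((('b::ring_1 \<times> 'b) \<times> ('b \<times> 'b) \<Rightarrow> int) \<Rightarrow> (('b \<times> 'b) \<times> ('b \<times> 'b) \<Rightarrow> int)) \<Rightarrow> bool" where
  "tensor_endo \<phi> \<longleftrightarrow>
     (\<forall>f\<in>free_grp. \<phi> f \<in> free_grp) \<and>
     (\<forall>f\<in>free_grp. \<forall>g\<in>free_grp. fsub f g \<in> tensor_rel \<longrightarrow> fsub (\<phi> f) (\<phi> g) \<in> tensor_rel) \<and>
     (\<forall>f\<in>free_grp. \<forall>g\<in>free_grp. fsub (\<phi> (fadd f g)) (fadd (\<phi> f) (\<phi> g)) \<in> tensor_rel) \<and>
     (\<forall>a. \<forall>f\<in>free_grp. fsub (\<phi> (lact a f)) (lact a (\<phi> f)) \<in> tensor_rel) \<and>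
     (\<forall>a. \<forall>f\<in>free_grp. fsub (\<phi> (ract f a)) (ract (\<phi> f) a) \<in> tensor_rel)"

definition endo_eq :: "((('b::ring_1 \<times> 'b) \<times> ('b \<times> 'b) \<Rightarrow> int) \<Rightarrow> (('b \<times> 'b) \<times> ('b \<times> 'b) \<Rightarrow> int))
    \<Rightarrow> ((('b \<times> 'b) \<times> ('b \<times> 'b) \<Rightarrow> int) \<Rightarrow> (('b \<times> 'b) \<times> ('b \<times> 'b) \<Rightarrow> int)) \<Rightarrow> bool" where
  "endo_eq \<phi> \<psi> \<longleftrightarrow> (\<forall>f\<in>free_grp. fsub (\<phi> f) (\<psi> f) \<in> tensor_rel)"

definition endo_unit :: "((('b::ring_1 \<times> 'b) \<times> ('b \<times> 'b) \<Rightarrow> int) \<Rightarrow> (('b \<times> 'b) \<times> ('b \<times> 'b) \<Rightarrow> int)) \<Rightarrow> bool" where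
  "endo_unit \<phi> \<longleftrightarrow> (\<exists>\<chi>. tensor_endo \<chi> \<and> endo_eq (\<chi> \<circ> \<phi>) id \<and> endo_eq (\<phi> \<circ> \<chi>) id)"

definition tensor_end_local :: "'b::ring_1 itself \<Rightarrow> bool" where
  "tensor_end_local _ \<longleftrightarrow>
     \<not> endo_eq (id :: (('b \<times> 'b) \<times> ('b \<times> 'b) \<Rightarrow> int) \<Rightarrow> _) (\<lambda>f. (\<lambda>_. 0)) \<and>
     (\<forall>\<phi> \<psi> :: (('b \<times> 'b) \<times> ('b \<times> 'b) \<Rightarrow> int) \<Rightarrow> (('b \<times> 'b) \<times> ('b \<times> 'b) \<Rightarrow> int).
        tensor_endo \<phi> \<and> tensor_endo \<psi> \<and> \<not> endo_unit \<phi> \<and> \<not> endo_unit \<psi>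
        \<longrightarrow> \<not> endo_unit (\<lambda>f. fadd (\<phi> f) (\<psi> f)))"

end

theory Submission
  imports Defs
begin

(* The proof identifies A \<otimes>\<^sub>B A
   with the ring R = B[\<epsilon>L, \<epsilon>R]/(\<epsilon>L\<^sup>2, \<epsilon>R\<^sup>2) of coordinates, via x \<otimes> y \<mapsto> \<iota>L(x) \<iota>R(y) where
   \<iota>L(b, m) = b + m \<epsilon>L and \<iota>R(b, m) = b + m \<epsilon>R.  Under this isomorphism the two A-actions become
   multiplication by \<iota>L(a) on the left and \<iota>R(a) on the right, and, \<epsilon>L being central, right
   multiplication by any element of R is a composite of bimodule operations.  Consequently
   (1) a sub-bimodule containing an element with invertible coordinates is everything, and
   (2) every bimodule endomorphism is left multiplication by some z \<in> R commuting with B;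
   it is invertible iff z is, iff the constant coefficient of z is invertible in B.
   On the side of B we only need that its centre is a local ring: by Fitting's lemma a central
   element of a finite-dimensional connected algebra is invertible or nilpotent.  Both halves
   of the theorem then reduce to: if a sum of two central elements of B is invertible, so is
   one of the summands.
   The sections below develop, in order: the centre of B; the ring R; the isomorphism
   A \<otimes>\<^sub>B A \<cong> R; sub-bimodules and indecomposability; endomorphisms and locality. *)

section \<open>The centre of a finite-dimensional connected algebra is local\<close>

definition central :: "'b::ring_1 \<Rightarrow> bool" where
  "central c \<longleftrightarrow> (\<forall>y. c * y = y * c)"

definition invertible :: "'a::monoid_mult \<Rightarrow> bool" where
  "invertible x \<longleftrightarrow> (\<exists>y. x * y = 1 \<and> y * x = 1)"

lemma central_comm: "central c \<Longrightarrow> c * y = y * c"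
  unfolding central_def by blast

lemma central_zero: "central 0"
  unfolding central_def by simp

lemma central_mult: "central a \<Longrightarrow> central b \<Longrightarrow> central (a * b)"
  unfolding central_def by (metis mult.assoc)

lemma central_add: "central a \<Longrightarrow> central b \<Longrightarrow> central (a + b)"
  unfolding central_def by (simp add: distrib_left distrib_right)

lemma central_one: "central 1"
  unfolding central_def by simp

lemma central_power: "central a \<Longrightarrow> central (a ^ n)"
  by (induction n) (simp_all add: central_one central_mult)

lemma invertible_mult:
  assumes "invertible a" "invertible b" shows "invertible (a * b)"
proof -
  obtain a' b' where "a * a' = 1" "a' * a = 1" "b * b' = 1" "b' * b = 1"
    using assms unfolding invertible_def by blast
  then have "(a * b) * (b' * a') = 1" "(b' * a') * (a * b) = 1"
    by (simp_all add: mult.assoc[symmetric]) (simp_all add: mult.assoc)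
  then show ?thesis unfolding invertible_def by blast
qed

lemma invertible_left_factor:
  assumes "invertible (a * b)" "invertible b" shows "invertible a"
proof -
  obtain b' where "b * b' = 1" "b' * b = 1" using assms(2) unfolding invertible_def by blast
  then have "a = (a * b) * b'" by (simp add: mult.assoc)
  moreover have "invertible b'" using \<open>b * b' = 1\<close> \<open>b' * b = 1\<close> unfolding invertible_def by blast
  ultimately show ?thesis using invertible_mult[OF assms(1)] by metis
qed

lemma inverse_commutes:
  fixes c z y :: "'a::monoid_mult"
  assumes "c * z = z * c" "z * y = 1" "y * z = 1" shows "c * y = y * c"
proof -
  have "c * y = (y * z) * c * y" using assms(3) by simp
  also have "\<dots> = y * c * (z * y)" using assms(1) by (metis mult.assoc)
  also have "\<dots> = y * c" using assms(2) by simp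
  finally show ?thesis .
qed

lemma geometric_sum:
  fixes x :: "'b::ring_1"
  shows "(1 - x) * (\<Sum>k<n. x ^ k) = 1 - x ^ n \<and> (\<Sum>k<n. x ^ k) * (1 - x) = 1 - x ^ n"
proof (induction n)
  case (Suc n)
  let ?S = "\<Sum>k<n. x ^ k"
  have "(1 - x) * (?S + x ^ n) = (1 - x) * ?S + (x ^ n - x * x ^ n)"
    and "(?S + x ^ n) * (1 - x) = ?S * (1 - x) + (x ^ n - x * x ^ n)"
    by (simp_all add: distrib_left distrib_right left_diff_distrib right_diff_distrib power_commutes)
  then show ?case using Suc by simp
qed simp

lemma invertible_one_minus_nilpotent:
  fixes x :: "'b::ring_1"
  assumes "x ^ n = 0" shows "invertible (1 - x)"
  using geometric_sum[of x n] assms unfolding invertible_def by auto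

lemma power_stable_iterate:
  fixes x y :: "'b::ring_1"
  assumes "x ^ m = x ^ Suc m * y" shows "x ^ m = x ^ (m + k) * y ^ k"
proof (induction k)
  case (Suc k)
  have "x ^ (m + k) = x ^ k * x ^ m" by (metis power_add add.commute)
  also have "\<dots> = x ^ k * (x ^ Suc m * y)" using assms by metis
  also have "\<dots> = x ^ (m + Suc k) * y" by (metis mult.assoc power_add add.commute add_Suc_right)
  finally have "x ^ (m + k) = x ^ (m + Suc k) * y" .
  then show ?case using Suc.IH by (metis mult.assoc power_Suc)
qed simp

(* Fitting's lemma, first half: the descending chain of subspaces x^n Z(B) of the centre
   stabilises by finite dimension, so x^n = x^(n+1) y for some central y. *)
lemma central_power_stabilizes:
  fixes sc :: "'k::field \<Rightarrow> 'b::ring_1 \<Rightarrow> 'b" and x :: 'b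
  assumes fd: "fin_dim_algebra sc" and cx: "central x"
  shows "\<exists>n y. central y \<and> x ^ n = x ^ Suc n * y"
proof -
  have ka: "k_algebra sc" and fS: "\<exists>S. finite S \<and> module.span sc S = UNIV"
    using fd unfolding fin_dim_algebra_def by auto
  interpret vector_space sc using ka unfolding k_algebra_def by auto
  obtain S where S: "finite S" "span S = UNIV" using fS by auto
  obtain B where B: "independent B" "UNIV \<subseteq> span B"
    using basis_exists[of UNIV] by metis
  have "finite B" using independent_span_bound[OF S(1) B(1)] S(2) by auto
  then interpret fd: finite_dimensional_vector_space sc B
    by unfold_locales (use B in auto)
  have sc_right: "sc c (a * b) = a * sc c b" and sc_left: "sc c (a * b) = sc c a * b" for c a b
    using ka unfolding k_algebra_def by metis+
  have central_sc: "central (sc c y)" if "central y" for c y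
  proof -
    have "central (sc c 1)" unfolding central_def by (metis mult_1_left mult_1_right sc_right sc_left)
    moreover have "sc c y = sc c 1 * y" using sc_left[of c 1 y] by simp
    ultimately show ?thesis using that central_mult by metis
  qed
  define I where "I n = (\<lambda>c. x ^ n * c) ` {c. central c}" for n
  have sub: "subspace (I n)" for n
    unfolding subspace_def I_def
  proof (intro conjI ballI allI)
    show "0 \<in> (\<lambda>c. x ^ n * c) ` {c. central c}"
      by (rule image_eqI[of _ _ 0]) (simp_all add: central_zero)
  next
    fix a b assume "a \<in> (\<lambda>c. x ^ n * c) ` {c. central c}" "b \<in> (\<lambda>c. x ^ n * c) ` {c. central c}"
    then obtain c d where "central c" "central d" "a = x ^ n * c" "b = x ^ n * d" by auto
    then show "a + b \<in> (\<lambda>c. x ^ n * c) ` {c. central c}"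
      by (intro image_eqI[of _ _ "c + d"]) (auto simp: distrib_left intro: central_add)
  next
    fix k a assume "a \<in> (\<lambda>c. x ^ n * c) ` {c. central c}"
    then obtain c where "central c" "a = x ^ n * c" by auto
    then show "sc k a \<in> (\<lambda>c. x ^ n * c) ` {c. central c}"
      by (intro image_eqI[of _ _ "sc k c"]) (auto simp: sc_right central_sc)
  qed
  have decreasing: "I (Suc n) \<subseteq> I n" for n
  proof
    fix a assume "a \<in> I (Suc n)"
    then obtain c where "central c" "a = x ^ Suc n * c" unfolding I_def by auto
    then have "a = x ^ n * (x * c)" "central (x * c)"
      using cx by (simp_all only: power_Suc2 mult.assoc central_mult)
    then show "a \<in> I n" unfolding I_def by blast
  qed
  obtain n where "\<And>m. dim (I n) \<le> dim (I m)"
    using ex_has_least_nat[of "\<lambda>_. True" _ "\<lambda>m. dim (I m)"] by blast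
  then have "I (Suc n) = I n" using fd.subspace_dim_equal[OF sub sub decreasing] by blast
  moreover have "x ^ n \<in> I n" unfolding I_def by (intro image_eqI[of _ _ 1]) (simp_all add: central_one)
  ultimately have "x ^ n \<in> I (Suc n)" by simp
  then obtain y where "central y" "x ^ n = x ^ Suc n * y" unfolding I_def by blast
  then show ?thesis by blast
qed

(* Fitting's lemma, second half: x^n y^n is a central idempotent, hence 0 or 1 by
   connectedness; accordingly x is nilpotent or invertible. *)
lemma central_invertible_or_nilpotent:
  fixes sc :: "'k::field \<Rightarrow> 'b::ring_1 \<Rightarrow> 'b" and x :: 'b
  assumes fd: "fin_dim_algebra sc" and conn: "connected_algebra TYPE('b)" and cx: "central x"
  shows "invertible x \<or> (\<exists>n. x ^ n = 0)"
proof -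
  obtain m y where cy: "central y" and stable: "x ^ m = x ^ Suc m * y"
    using central_power_stabilizes[OF fd cx] by blast
  define n where "n = Suc m"
  have "x ^ n = x ^ Suc n * y" unfolding n_def using stable by (metis power_Suc mult.assoc)
  then have stable_n: "x ^ n = x ^ (n + k) * y ^ k" for k by (rule power_stable_iterate)
  define e where "e = x ^ n * y ^ n"
  have "e * e = x ^ n * (y ^ n * x ^ n) * y ^ n" unfolding e_def by (simp add: mult.assoc)
  also have "\<dots> = x ^ n * (x ^ n * y ^ n) * y ^ n"
    using central_comm[OF central_power[OF cx], of n "y ^ n"] by simp
  also have "\<dots> = x ^ (n + n) * y ^ n * y ^ n" by (simp add: power_add mult.assoc)
  also have "\<dots> = e" unfolding e_def by (simp only: stable_n[of n, symmetric])
  finally have "e * e = e" .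
  moreover have "central e" unfolding e_def by (intro central_mult central_power cx cy)
  ultimately have "e = 0 \<or> e = 1" using conn unfolding connected_algebra_def central_def by blast
  then show ?thesis
  proof
    assume "e = 0"
    moreover have "x ^ (n + n) * y ^ n = x ^ n * e" unfolding e_def by (simp add: power_add mult.assoc)
    ultimately have "x ^ n = 0" using stable_n[of n] by (metis mult_zero_right)
    then show ?thesis by blast
  next
    assume "e = 1"
    then have "x * (x ^ m * y ^ n) = 1" unfolding e_def n_def by (simp add: mult.assoc)
    moreover have "central (x ^ m * y ^ n)" by (intro central_mult central_power cx cy)
    ultimately show ?thesis unfolding invertible_def using central_comm[OF cx] by metis
  qed
qed

(* Write c = (a+b)^-1; then ca is invertible or nilpotent, and in
   the second case cb = 1 - ca is invertible. *)
lemma central_local: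
  fixes sc :: "'k::field \<Rightarrow> 'b::ring_1 \<Rightarrow> 'b" and a b :: 'b
  assumes fd: "fin_dim_algebra sc" and conn: "connected_algebra TYPE('b)"
    and ca: "central a" and cb: "central b" and inv: "invertible (a + b)"
  shows "invertible a \<or> invertible b"
proof -
  obtain c where c: "(a + b) * c = 1" "c * (a + b) = 1" using inv unfolding invertible_def by blast
  have cc: "central c"
    unfolding central_def by (metis inverse_commutes c central_comm[OF central_add[OF ca cb]])
  have a_eq: "a = (a + b) * (c * a)" and b_eq: "b = (a + b) * (c * b)"
    using c by (simp_all add: mult.assoc[symmetric])
  have "c * b = 1 - c * a" using c(2) by (simp add: distrib_left algebra_simps)
  consider "invertible (c * a)" | n where "(c * a) ^ n = 0"
    using central_invertible_or_nilpotent[OF fd conn central_mult[OF cc ca]] by blast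
  then show ?thesis
  proof cases
    case 1 then show ?thesis using a_eq invertible_mult[OF inv] by metis
  next
    case 2
    then have "invertible (c * b)"
      using \<open>c * b = 1 - c * a\<close> invertible_one_minus_nilpotent by metis
    then show ?thesis using b_eq invertible_mult[OF inv] by metis
  qed
qed

section \<open>The coordinate ring R of dual numbers in two variables over B\<close>

(* Dual2 x1 x2 x3 x4 stands for x1 + x2 \<epsilon>R + x3 \<epsilon>L + x4 \<epsilon>L\<epsilon>R, where \<epsilon>L, \<epsilon>R are
   commuting central variables with \<epsilon>L\<^sup>2 = \<epsilon>R\<^sup>2 = 0; this ring will be identified with
   A \<otimes>\<^sub>B A. *)
datatype 'b dual2 = Dual2 (base: 'b) 'b 'b 'b

instantiation dual2 :: (ab_group_add) ab_group_add
begin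
fun plus_dual2 :: "'a dual2 \<Rightarrow> 'a dual2 \<Rightarrow> 'a dual2" where
  "Dual2 a b c d + Dual2 a' b' c' d' = Dual2 (a + a') (b + b') (c + c') (d + d')"
fun minus_dual2 :: "'a dual2 \<Rightarrow> 'a dual2 \<Rightarrow> 'a dual2" where
  "Dual2 a b c d - Dual2 a' b' c' d' = Dual2 (a - a') (b - b') (c - c') (d - d')"
fun uminus_dual2 :: "'a dual2 \<Rightarrow> 'a dual2" where
  "- Dual2 a b c d = Dual2 (- a) (- b) (- c) (- d)"
definition zero_dual2 :: "'a dual2" where
  "0 = Dual2 0 0 0 0"
instance
proof
  fix x y z :: "'a dual2"
  show "x + y + z = x + (y + z)" by (cases x; cases y; cases z) (simp add: add.assoc)
  show "x + y = y + x" by (cases x; cases y) (simp add: add.commute)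
  show "0 + x = x" by (cases x) (simp add: zero_dual2_def)
  show "- x + x = 0" by (cases x) (simp add: zero_dual2_def)
  show "x - y = x + - y" by (cases x; cases y) simp
qed
end

instantiation dual2 :: (ring_1) ring_1
begin
fun times_dual2 :: "'a dual2 \<Rightarrow> 'a dual2 \<Rightarrow> 'a dual2" where
  "Dual2 p q r s * Dual2 x1 x2 x3 x4 =
     Dual2 (p * x1) (p * x2 + q * x1) (p * x3 + r * x1) (p * x4 + q * x3 + r * x2 + s * x1)"
definition one_dual2 :: "'a dual2" where
  "1 = Dual2 1 0 0 0"
instance
proof
  fix x y z :: "'a dual2"
  show "x * y * z = x * (y * z)" by (cases x; cases y; cases z) (simp add: algebra_simps)
  show "(x + y) * z = x * z + y * z" by (cases x; cases y; cases z) (simp add: algebra_simps)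
  show "x * (y + z) = x * y + x * z" by (cases x; cases y; cases z) (simp add: algebra_simps)
  show "1 * x = x" by (cases x) (simp add: one_dual2_def)
  show "x * 1 = x" by (cases x) (simp add: one_dual2_def)
  show "(0::'a dual2) \<noteq> 1" by (simp add: zero_dual2_def one_dual2_def)
qed
end

lemma base_simps [simp]:
  "base (x + y) = base x + base y" "base (x - y) = base x - base y"
  "base (x * y) = base x * base y" "base 1 = 1" "base 0 = 0"
  by (cases x; cases y; simp add: zero_dual2_def one_dual2_def)+

lemma augmentation_nilpotent:
  fixes n :: "'b::ring_1 dual2"
  assumes "base n = 0" shows "n ^ 3 = 0"
  using assms by (cases n) (simp add: numeral_3_eq_3 zero_dual2_def one_dual2_def)

definition emb :: "'b::ring_1 \<Rightarrow> 'b dual2" where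
  "emb b = Dual2 b 0 0 0"

lemma base_emb [simp]: "base (emb b) = b"
  by (simp add: emb_def)

lemma emb_mult: "emb (a * b) = emb a * emb b" and emb_one: "emb 1 = 1"
  by (simp_all add: emb_def one_dual2_def)

(* Hence an element of R is invertible iff its constant coefficient is: if base z has
   inverse i, then z * emb i = 1 - n with n nilpotent. *)
lemma invertible_dual2_iff:
  fixes z :: "'b::ring_1 dual2"
  shows "invertible z \<longleftrightarrow> invertible (base z)"
proof
  assume "invertible z"
  then obtain y where "z * y = 1" "y * z = 1" unfolding invertible_def by blast
  then have "base z * base y = 1" "base y * base z = 1" by (metis base_simps(3,4))+
  then show "invertible (base z)" unfolding invertible_def by blast
next
  assume "invertible (base z)"
  then obtain i where i: "base z * i = 1" "i * base z = 1" unfolding invertible_def by blast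
  have "invertible (emb i)"
    using i unfolding invertible_def by (metis emb_mult emb_one)
  moreover have "invertible (1 - (1 - z * emb i))"
    by (rule invertible_one_minus_nilpotent[OF augmentation_nilpotent]) (simp add: i)
  ultimately show "invertible z" by (simp add: invertible_left_factor)
qed

definition left_emb :: "'b::ring_1 \<times> 'b \<Rightarrow> 'b dual2" where
  "left_emb a = Dual2 (fst a) 0 (snd a) 0"

definition right_emb :: "'b::ring_1 \<times> 'b \<Rightarrow> 'b dual2" where
  "right_emb a = Dual2 (fst a) (snd a) 0 0"

definition te_eps :: "'b::ring_1 \<times> 'b" where
  "te_eps = (0, 1)"

lemma left_emb_mult: "left_emb (te_mul x y) = left_emb x * left_emb y"
  and right_emb_mult: "right_emb (te_mul x y) = right_emb x * right_emb y"
  by (simp_all add: left_emb_def right_emb_def te_mul_def)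

lemma left_emb_add: "left_emb (te_add x y) = left_emb x + left_emb y"
  and right_emb_add: "right_emb (te_add x y) = right_emb x + right_emb y"
  by (simp_all add: left_emb_def right_emb_def te_add_def)

lemma left_emb_te_emb: "left_emb (te_emb b) = emb b"
  and right_emb_te_emb: "right_emb (te_emb b) = emb b"
  by (simp_all add: left_emb_def right_emb_def te_emb_def emb_def)

lemma eps_central: "left_emb te_eps * z = z * left_emb te_eps"
  by (cases z) (simp add: left_emb_def te_eps_def)

(* ... and R is generated as a right A-module by 1 and \<epsilon>L; this is why right
   multiplication by any element of R is expressible through the bimodule structure. *)
lemma dual2_decomp: "Dual2 x1 x2 x3 x4 = right_emb (x1, x2) + left_emb te_eps * right_emb (x3, x4)"
  by (simp add: left_emb_def right_emb_def te_eps_def)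

(* The centraliser of B in R; it will turn out to be End(A \<otimes>\<^sub>B A). *)
definition commutes_with_B :: "'b::ring_1 dual2 \<Rightarrow> bool" where
  "commutes_with_B z \<longleftrightarrow> (\<forall>b. emb b * z = z * emb b)"

lemma commutes_with_B_base:
  assumes "commutes_with_B z" shows "central (base z)"
  unfolding central_def
proof
  fix b
  have "base (emb b * z) = base (z * emb b)" using assms unfolding commutes_with_B_def by metis
  then show "base z * b = b * base z" by simp
qed

(* It also commutes with the image of A under the left embedding, since \<epsilon>L is central. *)
lemma commutes_with_B_left_emb:
  assumes "commutes_with_B z" shows "left_emb a * z = z * left_emb a"
proof -
  have comm: "emb b * z = z * emb b" for b using assms unfolding commutes_with_B_def by blast
  have eps_part: "left_emb te_eps * emb b * z = z * (left_emb te_eps * emb b)" for b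
  proof -
    have "left_emb te_eps * emb b * z = left_emb te_eps * (z * emb b)" by (simp add: mult.assoc comm)
    also have "\<dots> = z * (left_emb te_eps * emb b)" by (metis eps_central mult.assoc)
    finally show ?thesis .
  qed
  have "left_emb a = emb (fst a) + left_emb te_eps * emb (snd a)"
    by (simp add: left_emb_def emb_def te_eps_def)
  then show ?thesis by (simp add: distrib_left distrib_right comm eps_part)
qed

lemma commutes_with_B_add:
  "commutes_with_B z \<Longrightarrow> commutes_with_B w \<Longrightarrow> commutes_with_B (z + w)"
  unfolding commutes_with_B_def by (simp add: distrib_left distrib_right)

lemma commutes_with_B_inverse:
  "commutes_with_B z \<Longrightarrow> z * y = 1 \<Longrightarrow> y * z = 1 \<Longrightarrow> commutes_with_B y"
  unfolding commutes_with_B_def using inverse_commutes by blast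

section \<open>The tensor product of A with itself over B is isomorphic to R\<close>

type_synonym 'b tensor_rep = "('b \<times> 'b) \<times> ('b \<times> 'b) \<Rightarrow> int"

definition supp :: "('p \<Rightarrow> int) \<Rightarrow> 'p set" where
  "supp f = {p. f p \<noteq> 0}"

lemma free_grp_iff: "f \<in> free_grp \<longleftrightarrow> finite (supp f)"
  by (simp add: free_grp_def supp_def)

lemma supp_fadd: "supp (fadd f g) \<subseteq> supp f \<union> supp g"
  and supp_fsub: "supp (fsub f g) \<subseteq> supp f \<union> supp g"
  by (auto simp: supp_def fadd_def fsub_def)

lemma gen_free [simp]: "gen p \<in> free_grp"
  by (simp add: free_grp_def gen_def)

lemma zero_free [simp]: "(\<lambda>_. 0) \<in> free_grp"
  by (simp add: free_grp_def)

lemma fadd_free [simp]: "f \<in> free_grp \<Longrightarrow> g \<in> free_grp \<Longrightarrow> fadd f g \<in> free_grp"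
  and fsub_free [simp]: "f \<in> free_grp \<Longrightarrow> g \<in> free_grp \<Longrightarrow> fsub f g \<in> free_grp"
  unfolding free_grp_iff by (rule finite_subset[OF supp_fadd] finite_subset[OF supp_fsub]; simp)+

lemma neg_free [simp]: "f \<in> free_grp \<Longrightarrow> (\<lambda>q. - f q) \<in> free_grp"
  by (simp add: free_grp_def)

lemma rel_free: "f \<in> tensor_rel \<Longrightarrow> f \<in> free_grp"
  by (induction rule: tensor_rel.induct) simp_all

(* The support of a pushforward along g lies in the image of the support; the actions lact
   and ract are pushforwards along maps of A \<times> A, so they preserve finite support. *)
lemma supp_pushforward:
  assumes "\<And>p. F p = (\<Sum>q\<in>{q. f q \<noteq> 0 \<and> g q = p}. f q)"
  shows "supp F \<subseteq> g ` supp f"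
proof
  fix p assume "p \<in> supp F"
  then have "{q. f q \<noteq> 0 \<and> g q = p} \<noteq> {}" unfolding supp_def assms by force
  then show "p \<in> g ` supp f" unfolding supp_def by blast
qed

lemma lact_free [simp]:
  assumes "f \<in> free_grp" shows "lact a f \<in> free_grp"
proof -
  have "supp (lact a f) \<subseteq> (\<lambda>q. (te_mul a (fst q), snd q)) ` supp f"
    by (rule supp_pushforward) (simp add: lact_def)
  then show ?thesis using assms unfolding free_grp_iff using finite_subset by blast
qed

lemma ract_free [simp]:
  assumes "f \<in> free_grp" shows "ract f a \<in> free_grp"
proof -
  have "supp (ract f a) \<subseteq> (\<lambda>q. (fst q, te_mul (snd q) a)) ` supp f"
    by (rule supp_pushforward) (simp add: ract_def)
  then show ?thesis using assms unfolding free_grp_iff using finite_subset by blast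
qed

definition lin_ext :: "('p \<Rightarrow> 'r::ring_1) \<Rightarrow> ('p \<Rightarrow> int) \<Rightarrow> 'r" where
  "lin_ext h f = (\<Sum>p\<in>supp f. of_int (f p) * h p)"

lemma lin_ext_superset:
  "finite S \<Longrightarrow> supp f \<subseteq> S \<Longrightarrow> lin_ext h f = (\<Sum>p\<in>S. of_int (f p) * h p)"
  unfolding lin_ext_def by (rule sum.mono_neutral_left) (auto simp: supp_def)

lemma lin_ext_fadd:
  assumes "finite (supp f)" "finite (supp g)"
  shows "lin_ext h (fadd f g) = lin_ext h f + lin_ext h g"
proof -
  let ?S = "supp f \<union> supp g"
  have "lin_ext h (fadd f g) = (\<Sum>p\<in>?S. of_int (fadd f g p) * h p)"
    using assms by (intro lin_ext_superset[OF _ supp_fadd]) simp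
  also have "\<dots> = (\<Sum>p\<in>?S. of_int (f p) * h p) + (\<Sum>p\<in>?S. of_int (g p) * h p)"
    by (simp add: fadd_def distrib_right sum.distrib)
  also have "\<dots> = lin_ext h f + lin_ext h g"
    using assms lin_ext_superset[of ?S f h] lin_ext_superset[of ?S g h] by simp
  finally show ?thesis .
qed

lemma lin_ext_fsub:
  assumes "finite (supp f)" "finite (supp g)"
  shows "lin_ext h (fsub f g) = lin_ext h f - lin_ext h g"
proof -
  let ?S = "supp f \<union> supp g"
  have "lin_ext h (fsub f g) = (\<Sum>p\<in>?S. of_int (fsub f g p) * h p)"
    using assms by (intro lin_ext_superset[OF _ supp_fsub]) simp
  also have "\<dots> = (\<Sum>p\<in>?S. of_int (f p) * h p) - (\<Sum>p\<in>?S. of_int (g p) * h p)"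
    by (simp add: fsub_def left_diff_distrib sum_subtractf)
  also have "\<dots> = lin_ext h f - lin_ext h g"
    using assms lin_ext_superset[of ?S f h] lin_ext_superset[of ?S g h] by simp
  finally show ?thesis .
qed

lemma lin_ext_neg: "lin_ext h (\<lambda>q. - f q) = - lin_ext h f"
  by (simp add: lin_ext_def supp_def sum_negf)

lemma lin_ext_gen: "lin_ext h (gen p) = h p"
  by (simp add: lin_ext_def supp_def gen_def)

lemma lin_ext_zero: "lin_ext h (\<lambda>_. 0) = 0"
  by (simp add: lin_ext_def supp_def)

lemma lin_ext_left_mult: "lin_ext (\<lambda>q. c * h q) f = c * lin_ext h f"
  unfolding lin_ext_def sum_distrib_left
  by (rule sum.cong) (simp_all add: mult.assoc[symmetric], metis mult_of_int_commute)

lemma lin_ext_right_mult: "lin_ext (\<lambda>q. h q * c) f = lin_ext h f * c"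
  by (simp add: lin_ext_def sum_distrib_right mult.assoc)

lemma lin_ext_pushforward:
  assumes fin: "finite (supp f)"
    and F: "\<And>p. F p = (\<Sum>q\<in>{q. f q \<noteq> 0 \<and> g q = p}. f q)"
  shows "lin_ext h F = lin_ext (\<lambda>q. h (g q)) f"
proof -
  have fibre: "{q. f q \<noteq> 0 \<and> g q = p} = {q \<in> supp f. g q = p}" for p
    by (auto simp: supp_def)
  have "lin_ext h F = (\<Sum>p\<in>g ` supp f. of_int (F p) * h p)"
    using fin supp_pushforward[OF F] by (intro lin_ext_superset) auto
  also have "\<dots> = (\<Sum>p\<in>g ` supp f. \<Sum>q\<in>{q \<in> supp f. g q = p}. of_int (f q) * h (g q))"
    by (intro sum.cong refl) (auto simp: F fibre sum_distrib_right)
  also have "\<dots> = lin_ext (\<lambda>q. h (g q)) f"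
    unfolding lin_ext_def using sum.image_gen[OF fin, of "\<lambda>q. of_int (f q) * h (g q)" g] by simp
  finally show ?thesis .
qed

lemma lin_ext_rel:
  fixes h :: "('b::ring_1 \<times> 'b) \<times> ('b \<times> 'b) \<Rightarrow> 'r::ring_1"
  assumes add_left: "\<And>x x' y. h (te_add x x', y) = h (x, y) + h (x', y)"
    and add_right: "\<And>x y y'. h (x, te_add y y') = h (x, y) + h (x, y')"
    and balanced: "\<And>x y b. h (te_mul x (te_emb b), y) = h (x, te_mul (te_emb b) y)"
    and f: "f \<in> tensor_rel"
  shows "lin_ext h f = 0"
  using f
proof (induction rule: tensor_rel.induct)
  case (plus f g)
  then show ?case
    using rel_free[OF plus.hyps(1)] rel_free[OF plus.hyps(2)] by (simp add: lin_ext_fadd free_grp_iff)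
qed (simp_all add: lin_ext_zero lin_ext_neg lin_ext_fsub lin_ext_gen add_left add_right balanced
       flip: free_grp_iff)

definition gen_coord :: "('b::ring_1 \<times> 'b) \<times> ('b \<times> 'b) \<Rightarrow> 'b dual2" where
  "gen_coord p = left_emb (fst p) * right_emb (snd p)"

definition coord :: "'b::ring_1 tensor_rep \<Rightarrow> 'b dual2" where
  "coord f = lin_ext gen_coord f"

lemma coord_fadd: "f \<in> free_grp \<Longrightarrow> g \<in> free_grp \<Longrightarrow> coord (fadd f g) = coord f + coord g"
  and coord_fsub: "f \<in> free_grp \<Longrightarrow> g \<in> free_grp \<Longrightarrow> coord (fsub f g) = coord f - coord g"
  by (simp_all add: coord_def lin_ext_fadd lin_ext_fsub free_grp_iff)

lemma coord_neg: "coord (\<lambda>q. - f q) = - coord f"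
  and coord_gen: "coord (gen p) = gen_coord p"
  and coord_zero: "coord (\<lambda>_. 0) = 0"
  by (simp_all add: coord_def lin_ext_neg lin_ext_gen lin_ext_zero)

lemma coord_rel:
  assumes "f \<in> tensor_rel" shows "coord f = 0"
  unfolding coord_def
proof (rule lin_ext_rel[OF _ _ _ assms])
  show "gen_coord (te_add x x', y) = gen_coord (x, y) + gen_coord (x', y)" for x x' y
    by (simp add: gen_coord_def left_emb_add distrib_right)
  show "gen_coord (x, te_add y y') = gen_coord (x, y) + gen_coord (x, y')" for x y y'
    by (simp add: gen_coord_def right_emb_add distrib_left)
  show "gen_coord (te_mul x (te_emb b), y) = gen_coord (x, te_mul (te_emb b) y)" for x y b
    by (simp add: gen_coord_def left_emb_mult right_emb_mult left_emb_te_emb right_emb_te_emb mult.assoc)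
qed

lemma coord_lact:
  assumes "f \<in> free_grp" shows "coord (lact a f) = left_emb a * coord f"
proof -
  have "coord (lact a f) = lin_ext (\<lambda>q. gen_coord (te_mul a (fst q), snd q)) f"
    unfolding coord_def using assms by (intro lin_ext_pushforward) (simp_all add: free_grp_iff lact_def)
  also have "\<dots> = lin_ext (\<lambda>q. left_emb a * gen_coord q) f"
    by (simp add: gen_coord_def left_emb_mult mult.assoc)
  finally show ?thesis by (simp add: coord_def lin_ext_left_mult)
qed

lemma coord_ract:
  assumes "f \<in> free_grp" shows "coord (ract f a) = coord f * right_emb a"
proof -
  have "coord (ract f a) = lin_ext (\<lambda>q. gen_coord (fst q, te_mul (snd q) a)) f"
    unfolding coord_def using assms by (intro lin_ext_pushforward) (simp_all add: free_grp_iff ract_def)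
  also have "\<dots> = lin_ext (\<lambda>q. gen_coord q * right_emb a) f"
    by (simp add: gen_coord_def right_emb_mult mult.assoc)
  finally show ?thesis by (simp add: coord_def lin_ext_right_mult)
qed

fun coord_inv :: "'b::ring_1 dual2 \<Rightarrow> 'b tensor_rep" where
  "coord_inv (Dual2 p q r s) = fadd (gen (te_emb 1, (p, q))) (gen (te_eps, (r, s)))"

lemma coord_inv_free [simp]: "coord_inv z \<in> free_grp"
  by (cases z) simp

lemma coord_coord_inv: "coord (coord_inv z) = z"
  by (cases z) (simp add: coord_fadd coord_gen gen_coord_def left_emb_def right_emb_def te_eps_def te_emb_def)

lemma rel_fsub:
  assumes "f \<in> tensor_rel" "g \<in> tensor_rel" shows "fsub f g \<in> tensor_rel"
proof -
  have "fadd f (\<lambda>q. - g q) \<in> tensor_rel" using assms by (intro tensor_rel.plus tensor_rel.neg)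
  moreover have "fadd f (\<lambda>q. - g q) = fsub f g" by (simp add: fun_eq_iff fadd_def fsub_def)
  ultimately show ?thesis by simp
qed

(* Every generator is congruent to the section of its coordinates:
   (a, m) \<otimes> y = (a, 0) \<otimes> y + (0, m) \<otimes> y = 1 \<otimes> (a, 0) y + \<epsilon> \<otimes> (m, 0) y. *)
lemma gen_rel_coord_inv: "fsub (gen p) (coord_inv (gen_coord p)) \<in> tensor_rel"
proof -
  obtain a m c n where p: "p = ((a, m), (c, n))" by (metis prod.collapse)
  let ?y = "(c, n)"
  have split: "fsub (fsub (gen ((a, m), ?y)) (gen ((a, 0), ?y))) (gen ((0, m), ?y)) \<in> tensor_rel"
    using tensor_rel.addl[of "(a, 0)" "(0, m)" ?y] by (simp add: te_add_def)
  have bal_a: "fsub (gen ((a, 0), ?y)) (gen (te_emb 1, (a * c, a * n))) \<in> tensor_rel"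
    using tensor_rel.bal[of "te_emb 1" a ?y] by (simp add: te_mul_def te_emb_def)
  have bal_m: "fsub (gen ((0, m), ?y)) (gen (te_eps, (m * c, m * n))) \<in> tensor_rel"
    using tensor_rel.bal[of te_eps m ?y] by (simp add: te_mul_def te_emb_def te_eps_def)
  have "gen_coord p = Dual2 (a * c) (a * n) (m * c) (m * n)"
    by (simp add: p gen_coord_def left_emb_def right_emb_def)
  then have "fadd (fadd (fsub (fsub (gen ((a, m), ?y)) (gen ((a, 0), ?y))) (gen ((0, m), ?y)))
         (fsub (gen ((a, 0), ?y)) (gen (te_emb 1, (a * c, a * n)))))
         (fsub (gen ((0, m), ?y)) (gen (te_eps, (m * c, m * n)))) = fsub (gen p) (coord_inv (gen_coord p))"
    by (simp add: p fun_eq_iff fadd_def fsub_def)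
  then show ?thesis using split bal_a bal_m by (metis tensor_rel.plus)
qed

lemma coord_inv_add: "fsub (fsub (coord_inv (z + w)) (coord_inv z)) (coord_inv w) \<in> tensor_rel"
proof -
  obtain p q r s where z: "z = Dual2 p q r s" by (cases z)
  obtain p' q' r' s' where w: "w = Dual2 p' q' r' s'" by (cases w)
  have "fsub (fsub (gen (x, (p + p', q + q'))) (gen (x, (p, q)))) (gen (x, (p', q'))) \<in> tensor_rel"
    and "fsub (fsub (gen (x, (r + r', s + s'))) (gen (x, (r, s)))) (gen (x, (r', s'))) \<in> tensor_rel"
    for x :: "'a \<times> 'a"
    using tensor_rel.addr[of x "(p, q)" "(p', q')"] tensor_rel.addr[of x "(r, s)" "(r', s')"]
    by (simp_all add: te_add_def)
  moreover have "fadd (fsub (fsub (gen (te_emb 1, (p + p', q + q'))) (gen (te_emb 1, (p, q)))) (gen (te_emb 1, (p', q'))))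
     (fsub (fsub (gen (te_eps, (r + r', s + s'))) (gen (te_eps, (r, s)))) (gen (te_eps, (r', s'))))
     = fsub (fsub (coord_inv (z + w)) (coord_inv z)) (coord_inv w)"
    by (simp add: z w fun_eq_iff fadd_def fsub_def)
  ultimately show ?thesis by (metis tensor_rel.plus)
qed

lemma coord_inv_zero: "coord_inv (0 :: 'b::ring_1 dual2) \<in> tensor_rel"
proof -
  have "(\<lambda>q. - fsub (fsub (coord_inv (0 + 0)) (coord_inv 0)) (coord_inv (0 :: 'b dual2)) q) \<in> tensor_rel"
    by (intro tensor_rel.neg coord_inv_add)
  moreover have "(\<lambda>q. - fsub (fsub (coord_inv (0 + 0)) (coord_inv 0)) (coord_inv (0 :: 'b dual2)) q) = coord_inv 0"
    by (simp add: fun_eq_iff fsub_def)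
  ultimately show ?thesis by simp
qed

lemma free_grp_induct [consumes 1, case_names zero add sub]:
  fixes f :: "'b::ring_1 tensor_rep"
  assumes f: "f \<in> free_grp" and zero: "P (\<lambda>_. 0)"
    and add: "\<And>f p. f \<in> free_grp \<Longrightarrow> P f \<Longrightarrow> P (fadd f (gen p))"
    and sub: "\<And>f p. f \<in> free_grp \<Longrightarrow> P f \<Longrightarrow> P (fsub f (gen p))"
  shows "P f"
proof -
  have "\<forall>f :: 'b tensor_rep. supp f \<subseteq> S \<longrightarrow> P f" if "finite S" for S
    using that
  proof (induction S rule: finite_induct)
    case empty
    have "supp f \<subseteq> {} \<Longrightarrow> f = (\<lambda>_. 0)" for f :: "'b tensor_rep"
      by (auto simp: supp_def fun_eq_iff)
    then show ?case using zero by auto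
  next
    case (insert p S)
    show ?case
    proof (intro allI impI)
      fix f :: "'b tensor_rep" assume supp_f: "supp f \<subseteq> insert p S"
      let ?f0 = "f(p := 0)"
      have "supp ?f0 \<subseteq> S" using supp_f by (auto simp: supp_def)
      then have f0: "P ?f0" using insert.IH by blast
      have free: "?f0(p := k) \<in> free_grp" for k
      proof -
        have "supp (?f0(p := k)) \<subseteq> insert p (supp ?f0)" by (auto simp: supp_def)
        then have "supp (?f0(p := k)) \<subseteq> insert p S" using \<open>supp ?f0 \<subseteq> S\<close> by blast
        then show ?thesis unfolding free_grp_iff using insert.hyps(1) finite_subset by blast
      qed
      have "P (?f0(p := k))" for k :: int
      proof (induction k rule: int_induct[of _ 0])
        case base
        then show ?case using f0 by (simp only: fun_upd_upd)
      next
        case (step1 i)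
        have eq: "?f0(p := i + 1) = fadd (?f0(p := i)) (gen p)"
          by (auto simp: fun_eq_iff fadd_def gen_def)
        from add[OF free step1(2), of p] show ?case unfolding eq .
      next
        case (step2 i)
        have eq: "?f0(p := i - 1) = fsub (?f0(p := i)) (gen p)"
          by (auto simp: fun_eq_iff fsub_def gen_def)
        from sub[OF free step2(2), of p] show ?case unfolding eq .
      qed
      from this[of "f p"] show "P f" by simp
    qed
  qed
  then show ?thesis using f by (simp add: free_grp_iff)
qed

lemma coord_inv_coord:
  fixes f :: "'b::ring_1 tensor_rep"
  assumes "f \<in> free_grp" shows "fsub f (coord_inv (coord f)) \<in> tensor_rel"
  using assms
proof (induction f rule: free_grp_induct)
  case zero
  have "(\<lambda>q. - coord_inv (0 :: 'b dual2) q) \<in> tensor_rel" using coord_inv_zero by (rule tensor_rel.neg)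
  then show ?case by (simp add: coord_zero fsub_def)
next
  case (add f p)
  let ?c = "coord f" and ?e = "gen_coord p"
  have coord_sum: "coord (fadd f (gen p)) = ?c + ?e" using add.hyps by (simp add: coord_fadd coord_gen)
  have "fsub (fadd (fsub f (coord_inv ?c)) (fsub (gen p) (coord_inv ?e)))
      (fsub (fsub (coord_inv (?c + ?e)) (coord_inv ?c)) (coord_inv ?e)) \<in> tensor_rel"
    by (rule rel_fsub[OF tensor_rel.plus[OF add.IH gen_rel_coord_inv] coord_inv_add])
  moreover have "fsub (fadd (fsub f (coord_inv ?c)) (fsub (gen p) (coord_inv ?e)))
      (fsub (fsub (coord_inv (?c + ?e)) (coord_inv ?c)) (coord_inv ?e))
      = fsub (fadd f (gen p)) (coord_inv (coord (fadd f (gen p))))"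
    unfolding coord_sum by (simp add: fun_eq_iff fadd_def fsub_def)
  ultimately show ?case by simp
next
  case (sub f p)
  let ?c = "coord f" and ?e = "gen_coord p"
  have coord_diff: "coord (fsub f (gen p)) = ?c - ?e" using sub.hyps by (simp add: coord_fsub coord_gen)
  have "fadd (fsub (fsub f (coord_inv ?c)) (fsub (gen p) (coord_inv ?e)))
      (fsub (fsub (coord_inv (?c - ?e + ?e)) (coord_inv (?c - ?e))) (coord_inv ?e)) \<in> tensor_rel"
    by (rule tensor_rel.plus[OF rel_fsub[OF sub.IH gen_rel_coord_inv] coord_inv_add])
  moreover have "fadd (fsub (fsub f (coord_inv ?c)) (fsub (gen p) (coord_inv ?e)))
      (fsub (fsub (coord_inv (?c - ?e + ?e)) (coord_inv (?c - ?e))) (coord_inv ?e))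
      = fsub (fsub f (gen p)) (coord_inv (coord (fsub f (gen p))))"
    unfolding coord_diff by (simp add: fun_eq_iff fadd_def fsub_def)
  ultimately show ?case by simp
qed

lemma coord_kernel:
  assumes "f \<in> free_grp" "coord f = 0" shows "f \<in> tensor_rel"
proof -
  have "fadd (fsub f (coord_inv (coord f))) (coord_inv 0) \<in> tensor_rel"
    using coord_inv_coord[OF assms(1)] coord_inv_zero by (rule tensor_rel.plus)
  then show ?thesis using assms(2) by (simp add: fun_eq_iff fadd_def fsub_def)
qed

theorem rel_iff_coord_eq:
  assumes "f \<in> free_grp" "g \<in> free_grp"
  shows "fsub f g \<in> tensor_rel \<longleftrightarrow> coord f = coord g"
  using coord_rel[of "fsub f g"] coord_kernel[of "fsub f g"] assms by (auto simp: coord_fsub)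

section \<open>Sub-bimodules and indecomposability\<close>

definition one_tensor_one :: "'b::ring_1 tensor_rep" where
  "one_tensor_one = gen (te_emb 1, te_emb 1)"

lemma one_tensor_one_free [simp]: "one_tensor_one \<in> free_grp"
  by (simp add: one_tensor_one_def)

lemma coord_one_tensor_one: "coord one_tensor_one = 1"
  by (simp add: one_tensor_one_def coord_gen gen_coord_def left_emb_te_emb right_emb_te_emb emb_one)

(* Right multiplication by w \<in> R realised by bimodule operations:
   f \<cdot> (x1, x2) + \<epsilon> \<cdot> f \<cdot> (x3, x4). *)
fun rmul :: "'b::ring_1 tensor_rep \<Rightarrow> 'b dual2 \<Rightarrow> 'b tensor_rep" where
  "rmul f (Dual2 w1 w2 w3 w4) = fadd (ract f (w1, w2)) (lact te_eps (ract f (w3, w4)))"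

lemma rmul_free [simp]: "f \<in> free_grp \<Longrightarrow> rmul f w \<in> free_grp"
  by (cases w) simp

lemma coord_rmul:
  assumes "f \<in> free_grp" shows "coord (rmul f w) = coord f * w"
proof (cases w)
  case (Dual2 w1 w2 w3 w4)
  have "coord (rmul f w) = coord f * right_emb (w1, w2) + left_emb te_eps * (coord f * right_emb (w3, w4))"
    using assms by (simp add: Dual2 coord_fadd coord_lact coord_ract)
  also have "\<dots> = coord f * (right_emb (w1, w2) + left_emb te_eps * right_emb (w3, w4))"
    by (simp add: distrib_left mult.assoc[symmetric] eps_central[of "coord f"])
  finally show ?thesis by (simp only: Dual2 dual2_decomp)
qed

lemma submod_fadd: "tensor_submod U \<Longrightarrow> f \<in> U \<Longrightarrow> g \<in> U \<Longrightarrow> fadd f g \<in> U"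
  and submod_neg: "tensor_submod U \<Longrightarrow> f \<in> U \<Longrightarrow> (\<lambda>q. - f q) \<in> U"
  and submod_lact: "tensor_submod U \<Longrightarrow> f \<in> U \<Longrightarrow> lact a f \<in> U"
  and submod_ract: "tensor_submod U \<Longrightarrow> f \<in> U \<Longrightarrow> ract f a \<in> U"
  and submod_rel: "tensor_submod U \<Longrightarrow> f \<in> tensor_rel \<Longrightarrow> f \<in> U"
  and submod_free: "tensor_submod U \<Longrightarrow> f \<in> U \<Longrightarrow> f \<in> free_grp"
  unfolding tensor_submod_def by blast+

lemma submod_fsub:
  assumes "tensor_submod U" "f \<in> U" "g \<in> U" shows "fsub f g \<in> U"
proof -
  have "fadd f (\<lambda>q. - g q) \<in> U" using assms by (intro submod_fadd submod_neg)
  moreover have "fadd f (\<lambda>q. - g q) = fsub f g" by (simp add: fun_eq_iff fadd_def fsub_def)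
  ultimately show ?thesis by simp
qed

lemma submod_saturated:
  assumes U: "tensor_submod U" and u: "u \<in> U" and f: "f \<in> free_grp" and eq: "coord f = coord u"
  shows "f \<in> U"
proof -
  have "fsub f u \<in> tensor_rel" using eq f submod_free[OF U u] by (simp add: rel_iff_coord_eq)
  then have "fadd (fsub f u) u \<in> U" by (rule submod_fadd[OF U submod_rel[OF U] u])
  moreover have "fadd (fsub f u) u = f" by (simp add: fun_eq_iff fadd_def fsub_def)
  ultimately show ?thesis by simp
qed

lemma submod_right_ideal:
  assumes U: "tensor_submod U" and u: "u \<in> U" and f: "f \<in> free_grp" and eq: "coord f = coord u * w"
  shows "f \<in> U"
proof -
  obtain w1 w2 w3 w4 where w: "w = Dual2 w1 w2 w3 w4" by (cases w)
  have "rmul u w \<in> U"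
    unfolding w rmul.simps by (intro submod_fadd[OF U] submod_lact[OF U] submod_ract[OF U] u)
  moreover have "coord f = coord (rmul u w)"
    using eq coord_rmul[OF submod_free[OF U u]] by simp
  ultimately show ?thesis using submod_saturated[OF U _ f] by blast
qed

lemma submod_invertible_full:
  assumes U: "tensor_submod U" and u: "u \<in> U" and inv: "invertible (coord u)"
  shows "U = free_grp"
proof
  show "U \<subseteq> free_grp" using U submod_free by blast
next
  obtain y where y: "coord u * y = 1" using inv unfolding invertible_def by blast
  show "free_grp \<subseteq> U"
  proof
    fix f :: "'a tensor_rep" assume f: "f \<in> free_grp"
    have "coord f = coord u * (y * coord f)" by (simp add: mult.assoc[symmetric] y)
    then show "f \<in> U" by (rule submod_right_ideal[OF U u f])
  qed
qed

(* If U \<oplus> V = A \<otimes>\<^sub>B A and 1 \<otimes> 1 = u + v, then b u - u b \<in> U equals v b - b v \<in> V,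
   so it vanishes: the coordinates of u commute with B. *)
lemma complement_commutes_with_B:
  assumes U: "tensor_submod U" and V: "tensor_submod V" and UV: "U \<inter> V = tensor_rel"
    and u: "u \<in> U" and v: "v \<in> V" and sum: "coord u + coord v = 1"
  shows "commutes_with_B (coord u)"
  unfolding commutes_with_B_def
proof
  fix b
  have uf: "u \<in> free_grp" and vf: "v \<in> free_grp" using U V u v submod_free by blast+
  let ?du = "fsub (lact (te_emb b) u) (ract u (te_emb b))"
  let ?dv = "fsub (lact (te_emb b) v) (ract v (te_emb b))"
  have coord_du: "coord ?du = emb b * coord u - coord u * emb b"
    and coord_dv: "coord ?dv = emb b * coord v - coord v * emb b"
    using uf vf by (simp_all add: coord_fsub coord_lact coord_ract left_emb_te_emb right_emb_te_emb)
  have cv: "coord v = 1 - coord u" using sum by (simp add: algebra_simps)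
  have same_coord: "coord ?du = coord (\<lambda>q. - ?dv q)"
    unfolding coord_du coord_dv coord_neg cv by (simp add: algebra_simps)
  have neg_dv: "(\<lambda>q. - ?dv q) \<in> V"
    using v by (intro submod_neg[OF V] submod_fsub[OF V] submod_lact[OF V] submod_ract[OF V])
  have "?du \<in> U"
    using u by (intro submod_fsub[OF U] submod_lact[OF U] submod_ract[OF U])
  moreover have "?du \<in> V"
    using submod_saturated[OF V neg_dv] uf same_coord by simp
  ultimately have "?du \<in> tensor_rel" using UV by blast
  then have "coord ?du = 0" by (rule coord_rel)
  then show "emb b * coord u = coord u * emb b" by (simp add: coord_du)
qed

(* Indecomposability: the constant coefficients of the coordinates of u and v are central
   in B with sum 1, so one of them is invertible and its summand is everything. *)
theorem tensor_indecomposable: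
  fixes sc :: "'k::field \<Rightarrow> 'b::ring_1 \<Rightarrow> 'b"
  assumes fd: "fin_dim_algebra sc" and conn: "connected_algebra TYPE('b)"
  shows "tensor_indecomposable TYPE('b)"
  unfolding tensor_indecomposable_def
proof (intro conjI allI impI)
  have "coord (one_tensor_one :: 'b tensor_rep) \<noteq> 0" by (simp add: coord_one_tensor_one)
  then show "\<exists>f\<in>(free_grp :: 'b tensor_rep set). f \<notin> tensor_rel"
    using one_tensor_one_free coord_rel by blast
next
  fix U V :: "'b tensor_rep set"
  assume "tensor_submod U \<and> tensor_submod V \<and> U \<inter> V = tensor_rel \<and>
        (\<forall>f\<in>free_grp. \<exists>u\<in>U. \<exists>v\<in>V. fsub (fsub f u) v \<in> tensor_rel)"
  then have U: "tensor_submod U" and V: "tensor_submod V" and UV: "U \<inter> V = tensor_rel"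
    and spans: "\<forall>f\<in>free_grp. \<exists>u\<in>U. \<exists>v\<in>V. fsub (fsub f u) v \<in> tensor_rel" by auto
  obtain u v where u: "u \<in> U" and v: "v \<in> V" and rel: "fsub (fsub one_tensor_one u) v \<in> tensor_rel"
    using spans one_tensor_one_free by blast
  have "u \<in> free_grp" "v \<in> free_grp" using U V u v submod_free by blast+
  then have "1 - (coord u + coord v) = 0"
    using coord_rel[OF rel] by (simp add: coord_fsub coord_one_tensor_one diff_diff_eq)
  then have sum: "coord u + coord v = 1" by (metis right_minus_eq)
  have "commutes_with_B (coord u)"
    by (rule complement_commutes_with_B[OF U V UV u v sum])
  moreover have "commutes_with_B (coord v)"
    using UV sum by (intro complement_commutes_with_B[OF V U _ v u]) (simp_all add: Int_commute add.commute)
  moreover have "invertible (base (coord u) + base (coord v))"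
    using sum by (simp add: invertible_def flip: base_simps(1))
  ultimately have "invertible (base (coord u)) \<or> invertible (base (coord v))"
    by (intro central_local[OF fd conn] commutes_with_B_base)
  then have "invertible (coord u) \<or> invertible (coord v)"
    by (simp add: invertible_dual2_iff)
  then have "U = free_grp \<or> V = free_grp"
    using submod_invertible_full U V u v by blast
  moreover have "U \<subseteq> free_grp" "V \<subseteq> free_grp" using U V submod_free by blast+
  ultimately show "U = tensor_rel \<or> V = tensor_rel" using UV by blast
qed

section \<open>Endomorphisms and locality\<close>

definition acts_by :: "('b::ring_1 tensor_rep \<Rightarrow> 'b tensor_rep) \<Rightarrow> 'b dual2 \<Rightarrow> bool" where
  "acts_by \<phi> z \<longleftrightarrow> (\<forall>f\<in>free_grp. \<phi> f \<in> free_grp \<and> coord (\<phi> f) = z * coord f)"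

context
  fixes \<phi> :: "'b::ring_1 tensor_rep \<Rightarrow> 'b tensor_rep"
  assumes endo: "tensor_endo \<phi>"
begin

lemma endo_free: "f \<in> free_grp \<Longrightarrow> \<phi> f \<in> free_grp"
  using endo unfolding tensor_endo_def by blast

lemma endo_coord_cong:
  assumes "f \<in> free_grp" "g \<in> free_grp" "coord f = coord g"
  shows "coord (\<phi> f) = coord (\<phi> g)"
proof -
  have "fsub f g \<in> tensor_rel" using assms by (simp add: rel_iff_coord_eq)
  then have "fsub (\<phi> f) (\<phi> g) \<in> tensor_rel" using endo assms unfolding tensor_endo_def by blast
  then show ?thesis using assms by (simp add: rel_iff_coord_eq endo_free)
qed

lemma endo_coord_fadd:
  assumes "f \<in> free_grp" "g \<in> free_grp"
  shows "coord (\<phi> (fadd f g)) = coord (\<phi> f) + coord (\<phi> g)"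
proof -
  have "fsub (\<phi> (fadd f g)) (fadd (\<phi> f) (\<phi> g)) \<in> tensor_rel"
    using endo assms unfolding tensor_endo_def by blast
  then show ?thesis using assms by (simp add: rel_iff_coord_eq endo_free coord_fadd)
qed

lemma endo_coord_lact:
  assumes "f \<in> free_grp" shows "coord (\<phi> (lact a f)) = left_emb a * coord (\<phi> f)"
proof -
  have "fsub (\<phi> (lact a f)) (lact a (\<phi> f)) \<in> tensor_rel"
    using endo assms unfolding tensor_endo_def by blast
  then show ?thesis using assms by (simp add: rel_iff_coord_eq endo_free coord_lact)
qed

lemma endo_coord_ract:
  assumes "f \<in> free_grp" shows "coord (\<phi> (ract f a)) = coord (\<phi> f) * right_emb a"
proof -
  have "fsub (\<phi> (ract f a)) (ract (\<phi> f) a) \<in> tensor_rel"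
    using endo assms unfolding tensor_endo_def by blast
  then show ?thesis using assms by (simp add: rel_iff_coord_eq endo_free coord_ract)
qed

(* An endomorphism is determined by the image of 1 \<otimes> 1: writing f = 1 \<otimes> 1 \<cdot> coord f via
   rmul, \<phi> f = \<phi>(1 \<otimes> 1) \<cdot> coord f. *)
lemma endo_acts_by: "acts_by \<phi> (coord (\<phi> one_tensor_one))"
  unfolding acts_by_def
proof (intro ballI conjI)
  fix f :: "'b tensor_rep" assume f: "f \<in> free_grp"
  show "\<phi> f \<in> free_grp" using f by (rule endo_free)
  obtain w1 w2 w3 w4 where w: "coord f = Dual2 w1 w2 w3 w4" by (cases "coord f")
  have "coord (\<phi> f) = coord (\<phi> (rmul one_tensor_one (coord f)))"
    using f by (intro endo_coord_cong) (simp_all add: coord_rmul coord_one_tensor_one)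
  also have "\<dots> = coord (\<phi> one_tensor_one) * right_emb (w1, w2)
      + left_emb te_eps * (coord (\<phi> one_tensor_one) * right_emb (w3, w4))"
    by (simp add: w endo_coord_fadd endo_coord_lact endo_coord_ract)
  also have "\<dots> = coord (\<phi> one_tensor_one) * coord f"
    by (simp add: w dual2_decomp distrib_left mult.assoc[symmetric] eps_central[of "coord (\<phi> one_tensor_one)"])
  finally show "coord (\<phi> f) = coord (\<phi> one_tensor_one) * coord f" .
qed

(* Since b(1 \<otimes> 1) = (1 \<otimes> 1)b, the coordinates of \<phi>(1 \<otimes> 1) commute with B. *)
lemma endo_commutes_with_B: "commutes_with_B (coord (\<phi> one_tensor_one))"
  unfolding commutes_with_B_def
proof
  fix b
  have "coord (\<phi> (lact (te_emb b) one_tensor_one)) = coord (\<phi> (ract one_tensor_one (te_emb b)))"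
    by (intro endo_coord_cong)
       (simp_all add: coord_lact coord_ract coord_one_tensor_one left_emb_te_emb right_emb_te_emb)
  then show "emb b * coord (\<phi> one_tensor_one) = coord (\<phi> one_tensor_one) * emb b"
    by (simp add: endo_coord_lact endo_coord_ract left_emb_te_emb right_emb_te_emb)
qed

end

theorem tensor_endo_iff: "tensor_endo \<phi> \<longleftrightarrow> (\<exists>z. commutes_with_B z \<and> acts_by \<phi> z)"
proof
  assume "tensor_endo \<phi>"
  then show "\<exists>z. commutes_with_B z \<and> acts_by \<phi> z" using endo_acts_by endo_commutes_with_B by blast
next
  assume "\<exists>z. commutes_with_B z \<and> acts_by \<phi> z"
  then obtain z where cz: "commutes_with_B z" and act: "acts_by \<phi> z" by blast
  have free: "f \<in> free_grp \<Longrightarrow> \<phi> f \<in> free_grp"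
    and coord_\<phi>: "f \<in> free_grp \<Longrightarrow> coord (\<phi> f) = z * coord f" for f
    using act unfolding acts_by_def by blast+
  have commute: "z * (left_emb a * x) = left_emb a * (z * x)" for a x
    using commutes_with_B_left_emb[OF cz] by (metis mult.assoc)
  show "tensor_endo \<phi>"
    unfolding tensor_endo_def
    by (simp add: free rel_iff_coord_eq coord_\<phi> coord_fadd coord_fsub coord_lact coord_ract
        distrib_left mult.assoc commute)
qed

lemma endo_unit_iff:
  assumes cz: "commutes_with_B z" and act: "acts_by \<phi> z"
  shows "endo_unit \<phi> \<longleftrightarrow> invertible z"
proof
  assume "endo_unit \<phi>"
  then obtain \<chi> where "tensor_endo \<chi>" and left: "endo_eq (\<chi> \<circ> \<phi>) id" and right: "endo_eq (\<phi> \<circ> \<chi>) id"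
    unfolding endo_unit_def by blast
  then obtain y where act_\<chi>: "acts_by \<chi> y" using tensor_endo_iff by blast
  have "coord (\<chi> (\<phi> one_tensor_one)) = coord one_tensor_one"
    using left act act_\<chi> unfolding endo_eq_def acts_by_def by (simp add: rel_iff_coord_eq)
  then have yz: "y * z = 1"
    using act act_\<chi> unfolding acts_by_def by (simp add: coord_one_tensor_one)
  have "coord (\<phi> (\<chi> one_tensor_one)) = coord one_tensor_one"
    using right act act_\<chi> unfolding endo_eq_def acts_by_def by (simp add: rel_iff_coord_eq)
  then have zy: "z * y = 1"
    using act act_\<chi> unfolding acts_by_def by (simp add: coord_one_tensor_one)
  show "invertible z" using yz zy unfolding invertible_def by blast
next
  assume "invertible z"
  then obtain y where y: "z * y = 1" "y * z = 1" unfolding invertible_def by blast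
  define \<chi> where "\<chi> f = coord_inv (y * coord f)" for f
  have act_\<chi>: "acts_by \<chi> y" by (simp add: acts_by_def \<chi>_def coord_coord_inv)
  then have "tensor_endo \<chi>" using tensor_endo_iff commutes_with_B_inverse[OF cz y] by blast
  moreover have "endo_eq (\<chi> \<circ> \<phi>) id" "endo_eq (\<phi> \<circ> \<chi>) id"
    using act act_\<chi> y unfolding endo_eq_def acts_by_def by (simp_all add: rel_iff_coord_eq mult.assoc[symmetric])
  ultimately show "endo_unit \<phi>" unfolding endo_unit_def by blast
qed

(* Locality: if \<phi> + \<psi> were invertible, then so would be base z + base w, hence base z or
   base w by locality of the centre of B, hence \<phi> or \<psi>. *)
theorem tensor_end_local:
  fixes sc :: "'k::field \<Rightarrow> 'b::ring_1 \<Rightarrow> 'b"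
  assumes fd: "fin_dim_algebra sc" and conn: "connected_algebra TYPE('b)"
  shows "tensor_end_local TYPE('b)"
  unfolding tensor_end_local_def
proof (intro conjI allI impI notI)
  assume "endo_eq (id :: 'b tensor_rep \<Rightarrow> _) (\<lambda>f. (\<lambda>_. 0))"
  then have "fsub one_tensor_one (\<lambda>_. 0) \<in> (tensor_rel :: 'b tensor_rep set)"
    unfolding endo_eq_def by simp
  then have "coord (one_tensor_one :: 'b tensor_rep) = 0"
    by (simp add: rel_iff_coord_eq coord_zero)
  then show False by (simp add: coord_one_tensor_one)
next
  fix \<phi> \<psi> :: "'b tensor_rep \<Rightarrow> 'b tensor_rep"
  assume "tensor_endo \<phi> \<and> tensor_endo \<psi> \<and> \<not> endo_unit \<phi> \<and> \<not> endo_unit \<psi>"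
    and sum_unit: "endo_unit (\<lambda>f. fadd (\<phi> f) (\<psi> f))"
  then obtain z w where z: "commutes_with_B z" "acts_by \<phi> z" and w: "commutes_with_B w" "acts_by \<psi> w"
    and "\<not> endo_unit \<phi>" "\<not> endo_unit \<psi>"
    using tensor_endo_iff by blast
  then have non_units: "\<not> invertible z" "\<not> invertible w"
    using endo_unit_iff by blast+
  have "acts_by (\<lambda>f. fadd (\<phi> f) (\<psi> f)) (z + w)"
    using z(2) w(2) unfolding acts_by_def by (simp add: coord_fadd distrib_right)
  then have "invertible (z + w)"
    using endo_unit_iff commutes_with_B_add[OF z(1) w(1)] sum_unit by blast
  then have "invertible (base z + base w)" by (simp add: invertible_dual2_iff)
  then have "invertible (base z) \<or> invertible (base w)"
    by (intro central_local[OF fd conn] commutes_with_B_base z(1) w(1))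
  then show False using non_units by (simp add: invertible_dual2_iff)
qed

theorem lemma55:
  fixes sc :: "'k::field \<Rightarrow> 'b::ring_1 \<Rightarrow> 'b"
  assumes "alg_closed_field TYPE('k)"
    and "fin_dim_algebra sc"
    and "symmetric_algebra sc"
    and "connected_algebra TYPE('b)"
  shows "tensor_indecomposable TYPE('b) \<and> tensor_end_local TYPE('b)"
  using tensor_indecomposable[OF assms(2,4)] tensor_end_local[OF assms(2,4)] by blast

end
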